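(* Let $r\ge 1$ and let $x_0,y_0$ be positive integers. Let $p_r(x_0,y_0;x,y)$ denote the probability that the CA competition process with fitness ratio $r$ started at $(x_0,y_0)$ is at state $(x,y)$ at time $x+y-x_0-y_0$. Then for all integers $k\ge0$, $h\ge0$, \[ p_r(x_0,y_0;x_0+k,y_0+h)\ \le\ \frac{(x_0)_k\,(y_0)_h}{(r^{-1})_k\,(rx_0+y_0)_h}. \]
   Context: The CA competition process with fitness ratio $r\ge 1$ started at $(x_0,y_0)$ is the discrete-time Markov chain $\{(X_t,Y_t)\}_{t\ge0}$ on $\{(x,y)\in\mathbb{Z}^2: x\ge1,y\ge1\}$ with $(X_0,Y_0)=(x_0,y_0)$ and transition probabilities: from $(x,y)$ it moves to $(x+1,y)$ with probability $\frac{rx}{rx+y}$ and to $(x,y+1)$ with probability $\frac{y}{rx+y}$. $(x)_k=\prod_{i=0}^{k-1}(x+i)$ denotes the Pochhammer symbol (with $(x)_0=1$). *)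

theory Defs
  imports "HOL-Probability.Probability"
begin

definition CA_step :: "real \<Rightarrow> nat \<times> nat \<Rightarrow> (nat \<times> nat) pmf" where
  "CA_step r s = (case s of (x, y) \<Rightarrow>
     map_pmf (\<lambda>b. if b then (x + 1, y) else (x, y + 1))
       (bernoulli_pmf (r * real x / (r * real x + real y))))"

fun CA_dist :: "real \<Rightarrow> nat \<times> nat \<Rightarrow> nat \<Rightarrow> (nat \<times> nat) pmf" where
  "CA_dist r s0 0 = return_pmf s0"
| "CA_dist r s0 (Suc t) = bind_pmf (CA_dist r s0 t) (CA_step r)"

definition CA_p :: "real \<Rightarrow> nat \<Rightarrow> nat \<Rightarrow> nat \<Rightarrow> nat \<Rightarrow> real" where
  "CA_p r x0 y0 x y = pmf (CA_dist r (x0, y0) (x + y - x0 - y0)) (x, y)"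

end

theory Submission
  imports Defs
begin

text \<open>The right-hand side, as a function of the state and extended by zero outside the quadrant
  \<open>x \<ge> x0, y \<ge> y0\<close>, dominates the initial distribution and is a supersolution of the forward
  equation \<open>p\<^sub>t\<^sub>+\<^sub>1(x,y) = p\<^sub>t(x-1,y) \<alpha>(x-1,y) + p\<^sub>t(x,y-1) (1 - \<alpha>(x,y-1))\<close>
  with \<open>\<alpha>(a,b) = r a / (r a + b)\<close>; induction on time then bounds every \<open>p\<^sub>t\<close> by it.
  At an interior point, dividing the supersolution inequality by the bound leaves
  \<open>(1 + r k) / (S + 1 + r k) + S / (S + r + r k) \<le> 1\<close> with \<open>S = r x0 + y0 + h\<close>,
  which holds because \<open>r \<ge> 1\<close>.\<close>

definition CA_x_prob :: "real \<Rightarrow> nat \<Rightarrow> nat \<Rightarrow> real" where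
  "CA_x_prob r a b = r * real a / (r * real a + real b)"

definition CA_forward :: "real \<Rightarrow> (nat \<Rightarrow> nat \<Rightarrow> real) \<Rightarrow> nat \<Rightarrow> nat \<Rightarrow> real" where
  "CA_forward r f x y =
     (if 0 < x then f (x - 1) y * CA_x_prob r (x - 1) y else 0)
   + (if 0 < y then f x (y - 1) * (1 - CA_x_prob r x (y - 1)) else 0)"

lemma CA_x_prob_bounds:
  assumes "r \<ge> 0" shows "0 \<le> CA_x_prob r a b" "CA_x_prob r a b \<le> 1"
proof -
  have "0 \<le> r * real a" using assms by simp
  then show "0 \<le> CA_x_prob r a b" "CA_x_prob r a b \<le> 1"
    by (auto simp: CA_x_prob_def divide_simps)
qed

lemma one_minus_CA_x_prob:
  assumes "0 < r * real a + real b"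
  shows "1 - CA_x_prob r a b = real b / (r * real a + real b)"
  using assms by (simp add: CA_x_prob_def field_simps)

lemma CA_forward_mono:
  assumes "r \<ge> 0" and "\<And>a b. f a b \<le> g a b"
  shows "CA_forward r f x y \<le> CA_forward r g x y"
  unfolding CA_forward_def using assms CA_x_prob_bounds[OF assms(1)]
  by (intro add_mono) (auto intro: mult_right_mono)

lemma pmf_CA_step:
  assumes "r \<ge> 0"
  shows "pmf (CA_step r s) (x, y) =
           (if s = (x - 1, y) \<and> 0 < x then CA_x_prob r (x - 1) y else 0)
         + (if s = (x, y - 1) \<and> 0 < y then 1 - CA_x_prob r x (y - 1) else 0)"
proof -
  obtain a b where s: "s = (a, b)" by force
  let ?f = "\<lambda>c. if c then (a + 1, b) else (a, b + 1)"
  have "pmf (CA_step r s) (x, y) =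
          (\<Sum>c\<in>{c. ?f c = (x, y)}. pmf (bernoulli_pmf (CA_x_prob r a b)) c)"
    by (simp add: s CA_step_def CA_x_prob_def pmf_map measure_measure_pmf_finite vimage_def)
  also have "\<dots> = (\<Sum>c\<in>UNIV. if ?f c = (x, y) then pmf (bernoulli_pmf (CA_x_prob r a b)) c else 0)"
    by (simp add: sum.If_cases)
  finally show ?thesis
    using CA_x_prob_bounds[OF assms, of a b] by (auto simp: s UNIV_bool)
qed

lemma pmf_bind_CA_step:
  assumes "r \<ge> 0"
  shows "pmf (bind_pmf D (CA_step r)) (x, y) = CA_forward r (\<lambda>a b. pmf D (a, b)) x y"
proof -
  let ?c1 = "if 0 < x then CA_x_prob r (x - 1) y else 0"
  let ?c2 = "if 0 < y then 1 - CA_x_prob r x (y - 1) else 0"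
  have "pmf (bind_pmf D (CA_step r)) (x, y) =
          measure_pmf.expectation D (\<lambda>s. ?c1 * indicator {(x - 1, y)} s + ?c2 * indicator {(x, y - 1)} s)"
    unfolding pmf_bind
    by (intro Bochner_Integration.integral_cong refl) (auto simp: pmf_CA_step[OF assms] indicator_def)
  also have "\<dots> = ?c1 * measure D {(x - 1, y)} + ?c2 * measure D {(x, y - 1)}"
    by (subst Bochner_Integration.integral_add)
       (auto simp: measure_pmf.emeasure_finite less_top[symmetric])
  finally show ?thesis
    by (simp add: CA_forward_def measure_pmf_single)
qed

lemma pmf_CA_dist_le_supersolution:
  assumes "r \<ge> 0" and "1 \<le> g x0 y0" and "\<And>x y. 0 \<le> g x y"
    and "\<And>x y. CA_forward r g x y \<le> g x y"
  shows "pmf (CA_dist r (x0, y0) t) (x, y) \<le> g x y"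
proof (induction t arbitrary: x y)
  case 0
  show ?case using assms(2,3) by (auto simp: pmf_return indicator_def)
next
  case (Suc t)
  have "pmf (CA_dist r (x0, y0) (Suc t)) (x, y) = CA_forward r (\<lambda>a b. pmf (CA_dist r (x0, y0) t) (a, b)) x y"
    by (simp add: pmf_bind_CA_step[OF assms(1)])
  also have "\<dots> \<le> CA_forward r g x y"
    using Suc.IH by (intro CA_forward_mono[OF assms(1)])
  also have "\<dots> \<le> g x y" by (rule assms(4))
  finally show ?case .
qed

lemma add_fractions_le_one:
  fixes a b D1 D2 :: real
  assumes "0 < D1" and "D1 \<le> D2" and "a + b = D1" and "0 \<le> b"
  shows "a / D1 + b / D2 \<le> 1"
proof -
  have "b / D2 \<le> b / D1" using assms by (intro divide_left_mono) auto
  moreover have "a / D1 + b / D1 = 1" using assms by (simp add: add_divide_distrib[symmetric])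
  ultimately show ?thesis by linarith
qed

definition CA_bound :: "real \<Rightarrow> nat \<Rightarrow> nat \<Rightarrow> nat \<Rightarrow> nat \<Rightarrow> real" where
  "CA_bound r x0 y0 k h = pochhammer (real x0) k * pochhammer (real y0) h
       / (pochhammer (1 / r) k * pochhammer (r * real x0 + real y0) h)"

definition CA_envelope :: "real \<Rightarrow> nat \<Rightarrow> nat \<Rightarrow> nat \<Rightarrow> nat \<Rightarrow> real" where
  "CA_envelope r x0 y0 x y =
     (if x0 \<le> x \<and> y0 \<le> y then CA_bound r x0 y0 (x - x0) (y - y0) else 0)"

context
  fixes r :: real and x0 y0 :: nat
  assumes r: "r \<ge> 1" and x0: "x0 \<ge> 1" and y0: "y0 \<ge> 1"
begin

lemma CA_bound_pos: "CA_bound r x0 y0 k h > 0"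
  unfolding CA_bound_def using r x0 y0
  by (intro divide_pos_pos mult_pos_pos pochhammer_pos) (auto intro: add_pos_pos)

lemma CA_bound_Suc_left:
  "CA_bound r x0 y0 (Suc k) h = CA_bound r x0 y0 k h * (real x0 + real k) / (1 / r + real k)"
proof -
  have "1 / r + real k > 0" using r by (simp add: add_pos_nonneg)
  moreover have "pochhammer (1 / r) k > 0" "pochhammer (r * real x0 + real y0) h > 0"
    using r x0 y0 by (auto intro!: pochhammer_pos add_pos_pos)
  ultimately show ?thesis unfolding CA_bound_def pochhammer_Suc by (simp add: field_simps)
qed

lemma CA_bound_Suc_right:
  "CA_bound r x0 y0 k (Suc h) = CA_bound r x0 y0 k h * (real y0 + real h) / (r * real x0 + real y0 + real h)"
proof -
  have "r * real x0 + real y0 + real h > 0" using r y0 by (simp add: add_pos_nonneg add_nonneg_pos)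
  moreover have "pochhammer (1 / r) k > 0" "pochhammer (r * real x0 + real y0) h > 0"
    using r x0 y0 by (auto intro!: pochhammer_pos add_pos_pos)
  ultimately show ?thesis unfolding CA_bound_def pochhammer_Suc by (simp add: field_simps)
qed

lemma CA_bound_first_column:
  "CA_bound r x0 y0 0 h * (1 - CA_x_prob r x0 (y0 + h)) = CA_bound r x0 y0 0 (Suc h)"
proof -
  have "r * real x0 + real (y0 + h) > 0" using r y0 by (simp add: add_pos_nonneg add_nonneg_pos)
  then show ?thesis by (simp add: one_minus_CA_x_prob CA_bound_Suc_right add.assoc)
qed

lemma CA_bound_first_row:
  "CA_bound r x0 y0 k 0 * CA_x_prob r (x0 + k) y0 \<le> CA_bound r x0 y0 (Suc k) 0"
proof -
  have "1 \<le> r * real x0" using mult_mono[of 1 r 1 "real x0"] r x0 by simp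
  then have "1 + r * real k \<le> r * (real x0 + real k) + real y0"
    using r by (simp add: distrib_left)
  moreover have "0 < 1 + r * real k" using r by (simp add: add_pos_nonneg)
  ultimately have "CA_x_prob r (x0 + k) y0 \<le> r * (real x0 + real k) / (1 + r * real k)"
    unfolding CA_x_prob_def of_nat_add using r by (intro divide_left_mono) auto
  also have "\<dots> = (real x0 + real k) / (1 / r + real k)"
    using r by (simp add: field_simps)
  finally have "CA_bound r x0 y0 k 0 * CA_x_prob r (x0 + k) y0
      \<le> CA_bound r x0 y0 k 0 * ((real x0 + real k) / (1 / r + real k))"
    using CA_bound_pos[of k 0] by (intro mult_left_mono) auto
  then show ?thesis by (simp add: CA_bound_Suc_left)
qed

lemma CA_bound_interior:
  "CA_bound r x0 y0 k (Suc h) * CA_x_prob r (x0 + k) (y0 + Suc h)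
     + CA_bound r x0 y0 (Suc k) h * (1 - CA_x_prob r (x0 + Suc k) (y0 + h))
   \<le> CA_bound r x0 y0 (Suc k) (Suc h)"
proof -
  define b X Y u S D1 D2 where "b = CA_bound r x0 y0 k h"
    and "X = real x0 + real k" and "Y = real y0 + real h" and "u = 1 / r + real k"
    and "S = r * real x0 + real y0 + real h"
    and "D1 = S + 1 + r * real k" and "D2 = S + r + r * real k"
  define M where "M = b * X * Y / (u * S)"
  have "r * real x0 > 0" using r x0 by simp
  then have pos: "b > 0" "X > 0" "Y > 0" "u > 0" "S > 0"
    unfolding b_def X_def Y_def u_def S_def using r x0 y0 CA_bound_pos
    by (simp_all add: add_pos_nonneg)
  have D: "0 < D1" "D1 \<le> D2" "r * u + S = D1"
    unfolding D1_def D2_def u_def using pos r by (simp_all add: field_simps add_pos_nonneg)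
  have d1: "r * real (x0 + k) + real (y0 + Suc h) = D1"
    and d2: "r * real (x0 + Suc k) + real (y0 + h) = D2"
    unfolding D1_def D2_def S_def by (simp_all add: algebra_simps)
  have "CA_bound r x0 y0 k (Suc h) * CA_x_prob r (x0 + k) (y0 + Suc h) = b * Y / S * (r * X / D1)"
    unfolding CA_x_prob_def d1 b_def X_def Y_def S_def by (simp add: CA_bound_Suc_right add.assoc)
  also have "\<dots> = M * (r * u / D1)"
    using pos D by (simp add: M_def field_simps)
  finally have left: "CA_bound r x0 y0 k (Suc h) * CA_x_prob r (x0 + k) (y0 + Suc h)
      = M * (r * u / D1)" .
  have "1 - CA_x_prob r (x0 + Suc k) (y0 + h) = Y / D2"
    using one_minus_CA_x_prob[of r "x0 + Suc k" "y0 + h"] D unfolding d2 Y_def by simp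
  then have "CA_bound r x0 y0 (Suc k) h * (1 - CA_x_prob r (x0 + Suc k) (y0 + h)) = b * X / u * (Y / D2)"
    unfolding b_def X_def u_def by (simp add: CA_bound_Suc_left)
  also have "\<dots> = M * (S / D2)"
    using pos D by (simp add: M_def field_simps)
  finally have right: "CA_bound r x0 y0 (Suc k) h * (1 - CA_x_prob r (x0 + Suc k) (y0 + h))
      = M * (S / D2)" .
  have "CA_bound r x0 y0 (Suc k) (Suc h) = M"
    unfolding M_def b_def X_def Y_def u_def S_def by (simp add: CA_bound_Suc_left CA_bound_Suc_right)
  moreover have "M \<ge> 0" unfolding M_def using pos by simp
  ultimately show ?thesis
    unfolding left right using add_fractions_le_one[OF D less_imp_le[OF pos(5)]]
    by (metis distrib_left mult_left_mono mult.right_neutral)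
qed

lemma CA_envelope_nonneg: "0 \<le> CA_envelope r x0 y0 x y"
  unfolding CA_envelope_def using CA_bound_pos less_imp_le by auto

lemma CA_envelope_supersolution: "CA_forward r (CA_envelope r x0 y0) x y \<le> CA_envelope r x0 y0 x y"
proof (cases "x0 \<le> x \<and> y0 \<le> y")
  case False
  then show ?thesis by (auto simp: CA_forward_def CA_envelope_def)
next
  case True
  then obtain k h where xy: "x = x0 + k" "y = y0 + h" using le_Suc_ex by blast
  show ?thesis
  proof (cases k; cases h)
    assume "k = 0" "h = 0"
    then show ?thesis using xy x0 y0 CA_envelope_nonneg[of x y] by (auto simp: CA_forward_def CA_envelope_def)
  next
    fix h' assume "k = 0" "h = Suc h'"
    then show ?thesis using xy x0 CA_bound_first_column[of h'] by (auto simp: CA_forward_def CA_envelope_def)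
  next
    fix k' assume "k = Suc k'" "h = 0"
    then show ?thesis using xy y0 CA_bound_first_row[of k'] by (auto simp: CA_forward_def CA_envelope_def)
  next
    fix k' h' assume "k = Suc k'" "h = Suc h'"
    then show ?thesis using xy CA_bound_interior[of k' h'] by (auto simp: CA_forward_def CA_envelope_def)
  qed
qed

end

theorem lemma2:
  fixes r :: real and x0 y0 k h :: nat
  assumes "r \<ge> 1" and "x0 \<ge> 1" and "y0 \<ge> 1"
  shows "CA_p r x0 y0 (x0 + k) (y0 + h)
    \<le> pochhammer (real x0) k * pochhammer (real y0) h
       / (pochhammer (1 / r) k * pochhammer (r * real x0 + real y0) h)"
proof -
  have "CA_p r x0 y0 (x0 + k) (y0 + h) = pmf (CA_dist r (x0, y0) (k + h)) (x0 + k, y0 + h)"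
    unfolding CA_p_def by (simp add: algebra_simps)
  also have "\<dots> \<le> CA_envelope r x0 y0 (x0 + k) (y0 + h)"
  proof (rule pmf_CA_dist_le_supersolution)
    show "1 \<le> CA_envelope r x0 y0 x0 y0" by (simp add: CA_envelope_def CA_bound_def)
  qed (use assms CA_envelope_nonneg CA_envelope_supersolution in auto)
  also have "\<dots> = CA_bound r x0 y0 k h" by (simp add: CA_envelope_def)
  finally show ?thesis unfolding CA_bound_def .
qed

end
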